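(* Let $R$ be a commutative ring and let $(A,L',L'')$ be an almost twilled Lie-Rinehart algebra over $R$ such that $L'$ and $L''$ are finitely generated and projective as $A$-modules. Then $(A,L',L'')$ is a twilled Lie-Rinehart algebra if and only if $(A,L,D)=(A,L'\ltimes{L''}^*,L''\ltimes{L'}^* )$ is a Lie-Rinehart bialgebra.
   Context: A Lie-Rinehart algebra $(A,L)$ over a commutative ring $R$ consists of a commutative $R$-algebra $A$, an $R$-Lie algebra $L$ which is an $A$-module, and a Lie algebra action $L\to\mathrm{Der}(A)$, $\alpha\mapsto(a\mapsto\alpha(a))$, such that $(a\alpha)(b)=a\,\alpha(b)$ and $[\alpha,a\beta]=\alpha(a)\beta+a[\alpha,\beta]$ for $a,b\in A$, $\alpha,\beta\in L$; $L$ is then called an $(R,A)$-Lie algebra. An $(A,L)$-module is an $A$-module $M$ with an $R$-Lie algebra action of $L$ satisfying $(a\alpha)(m)=a(\alpha(m))$ and $\alpha(am)=\alpha(a)m+a\alpha(m)$. An almost twilled Lie-Rinehart algebra $(A,L',L'')$ consists of two Lie-Rinehart algebras $(A,L')$, $(A,L'')$ (same $A$) together with $R$-linear pairings $L'\otimes_RL''\to L''$ and $L''\otimes_RL'\to L'$ (both written $\cdot$) making $L''$ an $(A,L')$-module and $L'$ an $(A,L'')$-module. It is a twilled Lie-Rinehart algebra if the direct sum $A$-module $L'\oplus L''$, with action on $A$ the sum of the actions of $L'$ and $L''$ and with bracket $[(\alpha'',\alpha'),(\beta'',\beta')]=[\alpha'',\beta'']+[\alpha',\beta']+\alpha''\cdot\beta'-\beta'\cdot\alpha''+\alpha'\cdot\beta''-\beta''\cdot\alpha'$,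 is a Lie-Rinehart algebra over $A$. The $(A,L')$-module structure on $L''$ induces one on ${L''}^*=\mathrm{Hom}_A(L'',A)$; regarding ${L''}^*$ as an abelian $(R,A)$-Lie algebra, $L=L'\ltimes{L''}^*$ is the semidirect product $(R,A)$-Lie algebra: $A$-module $L'\oplus{L''}^*$, bracket $[(x,\phi),(y,\psi)]=([x,y],x\cdot\psi-y\cdot\phi)$, action on $A$ through $L'$. Likewise $D=L''\ltimes{L'}^*$ using the $(A,L'')$-module structure on $L'$. As $A$-modules $D\cong\mathrm{Hom}_A(L,A)$. For an $(R,A)$-Lie algebra $L$, $\Lambda_AL$ carries the Gerstenhaber bracket $[\cdot,\cdot]$ extending the bracket of $L$ and $[\alpha,a]=\alpha(a)$; on $u=\alpha_1\wedge\dots\wedge\alpha_\ell$, $v=\alpha_{\ell+1}\wedge\dots\wedge\alpha_n$ it is $[u,v]=(-1)^{\ell}\sum_{j\le\ell<k}(-1)^{j+k}[\alpha_j,\alpha_k]\wedge\alpha_1\wedge\dots\widehat{\alpha_j}\dots\widehat{\alpha_k}\dots\wedge\alpha_n$. The Lie-Rinehart structure on $D$ gives the Lie-Rinehart (Chevalley–Eilenberg) differential $d_*$ on $\mathrm{Alt}_A(D,A)\cong\Lambda_AL$. $(A,L,D)$ is a Lie-Rinehart bialgebra if $d_*[x,y]=[d_*x,y]+[x,d_*y]$ for all $x,y\in L$ (equivalently, the Lie-Rinehart differential $d$ of $L$ on $\mathrm{Alt}_A(L,A)\cong\Lambda_AD$ is a derivation of the Gerstenhaber bracket $[\cdot,\cdot]_*$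 of $D$: $d[x,y]_*=[dx,y]_*-(-1)^{|x|}[x,dy]_*$ for all $x,y\in\Lambda_AD$). *)

theory Defs
  imports Main "HOL-Library.Function_Algebras" "HOL-Library.Product_Plus"
begin

(* R is a type 'r :: comm_ring_1; the commutative R-algebra A is a type 'a :: comm_ring_1
   together with its structure map iota : R -> A (a unital ring homomorphism).
   R acts on A-modules through iota. *)

definition R_algebra_map :: "('r::comm_ring_1 \<Rightarrow> 'a::comm_ring_1) \<Rightarrow> bool" where
  "R_algebra_map \<iota> \<longleftrightarrow> \<iota> 1 = 1 \<and> (\<forall>r s. \<iota> (r + s) = \<iota> r + \<iota> s) \<and> (\<forall>r s. \<iota> (r * s) = \<iota> r * \<iota> s)"

definition A_module :: "'l::ab_group_add set \<Rightarrow> ('a::comm_ring_1 \<Rightarrow> 'l \<Rightarrow> 'l) \<Rightarrow> bool" where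
  "A_module C sm \<longleftrightarrow>
     0 \<in> C \<and> (\<forall>x\<in>C. \<forall>y\<in>C. x + y \<in> C) \<and> (\<forall>x\<in>C. - x \<in> C) \<and> (\<forall>a. \<forall>x\<in>C. sm a x \<in> C)
   \<and> (\<forall>a. \<forall>x\<in>C. \<forall>y\<in>C. sm a (x + y) = sm a x + sm a y)
   \<and> (\<forall>a b. \<forall>x\<in>C. sm (a + b) x = sm a x + sm b x)
   \<and> (\<forall>a b. \<forall>x\<in>C. sm (a * b) x = sm a (sm b x))
   \<and> (\<forall>x\<in>C. sm 1 x = x)"

definition R_derivation :: "('r::comm_ring_1 \<Rightarrow> 'a::comm_ring_1) \<Rightarrow> ('a \<Rightarrow> 'a) \<Rightarrow> bool" where
  "R_derivation \<iota> \<delta> \<longleftrightarrow> (\<forall>a b. \<delta> (a + b) = \<delta> a + \<delta> b) \<and> (\<forall>r a. \<delta> (\<iota> r * a) = \<iota> r * \<delta> a)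
     \<and> (\<forall>a b. \<delta> (a * b) = a * \<delta> b + b * \<delta> a)"

definition is_LR :: "('r::comm_ring_1 \<Rightarrow> 'a::comm_ring_1) \<Rightarrow> 'l::ab_group_add set
    \<Rightarrow> ('a \<Rightarrow> 'l \<Rightarrow> 'l) \<Rightarrow> ('l \<Rightarrow> 'l \<Rightarrow> 'l) \<Rightarrow> ('l \<Rightarrow> 'a \<Rightarrow> 'a) \<Rightarrow> bool" where
  "is_LR \<iota> C sm br anc \<longleftrightarrow>
     A_module C sm
   \<and> (\<forall>x\<in>C. \<forall>y\<in>C. br x y \<in> C)
   \<and> (\<forall>x\<in>C. \<forall>y\<in>C. \<forall>z\<in>C. br (x + y) z = br x z + br y z \<and> br x (y + z) = br x y + br x z)
   \<and> (\<forall>r. \<forall>x\<in>C. \<forall>y\<in>C. br (sm (\<iota> r) x) y = sm (\<iota> r) (br x y) \<and> br x (sm (\<iota> r) y) = sm (\<iota> r) (br x y))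
   \<and> (\<forall>x\<in>C. br x x = 0)
   \<and> (\<forall>x\<in>C. \<forall>y\<in>C. \<forall>z\<in>C. br x (br y z) + br y (br z x) + br z (br x y) = 0)
   \<and> (\<forall>x\<in>C. R_derivation \<iota> (anc x))
   \<and> (\<forall>x\<in>C. \<forall>y\<in>C. \<forall>a. anc (x + y) a = anc x a + anc y a)
   \<and> (\<forall>r. \<forall>x\<in>C. \<forall>a. anc (sm (\<iota> r) x) a = \<iota> r * anc x a)
   \<and> (\<forall>x\<in>C. \<forall>y\<in>C. \<forall>a. anc (br x y) a = anc x (anc y a) - anc y (anc x a))
   \<and> (\<forall>a b. \<forall>x\<in>C. anc (sm a x) b = a * anc x b)
   \<and> (\<forall>a. \<forall>x\<in>C. \<forall>y\<in>C. br x (sm a y) = sm (anc x a) y + sm a (br x y))"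

definition is_LR_module :: "('r::comm_ring_1 \<Rightarrow> 'a::comm_ring_1) \<Rightarrow> 'l::ab_group_add set
    \<Rightarrow> ('a \<Rightarrow> 'l \<Rightarrow> 'l) \<Rightarrow> ('l \<Rightarrow> 'l \<Rightarrow> 'l) \<Rightarrow> ('l \<Rightarrow> 'a \<Rightarrow> 'a)
    \<Rightarrow> 'm::ab_group_add set \<Rightarrow> ('a \<Rightarrow> 'm \<Rightarrow> 'm) \<Rightarrow> ('l \<Rightarrow> 'm \<Rightarrow> 'm) \<Rightarrow> bool" where
  "is_LR_module \<iota> C sm br anc CM smM act \<longleftrightarrow>
     A_module CM smM
   \<and> (\<forall>x\<in>C. \<forall>m\<in>CM. act x m \<in> CM)
   \<and> (\<forall>x\<in>C. \<forall>y\<in>C. \<forall>m\<in>CM. act (x + y) m = act x m + act y m)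
   \<and> (\<forall>x\<in>C. \<forall>m\<in>CM. \<forall>n\<in>CM. act x (m + n) = act x m + act x n)
   \<and> (\<forall>r. \<forall>x\<in>C. \<forall>m\<in>CM. act (sm (\<iota> r) x) m = smM (\<iota> r) (act x m) \<and> act x (smM (\<iota> r) m) = smM (\<iota> r) (act x m))
   \<and> (\<forall>x\<in>C. \<forall>y\<in>C. \<forall>m\<in>CM. act (br x y) m = act x (act y m) - act y (act x m))
   \<and> (\<forall>a. \<forall>x\<in>C. \<forall>m\<in>CM. act (sm a x) m = smM a (act x m))
   \<and> (\<forall>a. \<forall>x\<in>C. \<forall>m\<in>CM. act x (smM a m) = smM (anc x a) m + smM a (act x m))"

(* Almost twilled Lie-Rinehart algebra (A,L',L''): L' is the type 'p with (sm1, br1, anc1),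
   L'' is the type 'q with (sm2, br2, anc2); dot12 : L' (x) L'' -> L'' and dot21 : L'' (x) L' -> L'. *)
definition almost_twilled :: "('r::comm_ring_1 \<Rightarrow> 'a::comm_ring_1)
    \<Rightarrow> ('a \<Rightarrow> 'p::ab_group_add \<Rightarrow> 'p) \<Rightarrow> ('p \<Rightarrow> 'p \<Rightarrow> 'p) \<Rightarrow> ('p \<Rightarrow> 'a \<Rightarrow> 'a)
    \<Rightarrow> ('a \<Rightarrow> 'q::ab_group_add \<Rightarrow> 'q) \<Rightarrow> ('q \<Rightarrow> 'q \<Rightarrow> 'q) \<Rightarrow> ('q \<Rightarrow> 'a \<Rightarrow> 'a)
    \<Rightarrow> ('p \<Rightarrow> 'q \<Rightarrow> 'q) \<Rightarrow> ('q \<Rightarrow> 'p \<Rightarrow> 'p) \<Rightarrow> bool" where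
  "almost_twilled \<iota> sm1 br1 anc1 sm2 br2 anc2 dot12 dot21 \<longleftrightarrow>
     is_LR \<iota> UNIV sm1 br1 anc1 \<and> is_LR \<iota> UNIV sm2 br2 anc2
   \<and> is_LR_module \<iota> UNIV sm1 br1 anc1 UNIV sm2 dot12
   \<and> is_LR_module \<iota> UNIV sm2 br2 anc2 UNIV sm1 dot21"

definition sum_sm :: "('a \<Rightarrow> 'p \<Rightarrow> 'p) \<Rightarrow> ('a \<Rightarrow> 'q \<Rightarrow> 'q) \<Rightarrow> 'a \<Rightarrow> 'p \<times> 'q \<Rightarrow> 'p \<times> 'q" where
  "sum_sm sm1 sm2 a u = (sm1 a (fst u), sm2 a (snd u))"

definition sum_anc :: "('p \<Rightarrow> 'a::comm_ring_1) \<Rightarrow> ('q \<Rightarrow> 'a) \<Rightarrow> 'p \<times> 'q \<Rightarrow> 'a" where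
  "sum_anc anc1 anc2 u = anc1 (fst u) + anc2 (snd u)"

definition sum_br :: "('p::ab_group_add \<Rightarrow> 'p \<Rightarrow> 'p) \<Rightarrow> ('q::ab_group_add \<Rightarrow> 'q \<Rightarrow> 'q)
    \<Rightarrow> ('p \<Rightarrow> 'q \<Rightarrow> 'q) \<Rightarrow> ('q \<Rightarrow> 'p \<Rightarrow> 'p) \<Rightarrow> 'p \<times> 'q \<Rightarrow> 'p \<times> 'q \<Rightarrow> 'p \<times> 'q" where
  "sum_br br1 br2 dot12 dot21 u v =
     (br1 (fst u) (fst v) + dot21 (snd u) (fst v) - dot21 (snd v) (fst u),
      br2 (snd u) (snd v) + dot12 (fst u) (snd v) - dot12 (fst v) (snd u))"

definition twilled :: "('r::comm_ring_1 \<Rightarrow> 'a::comm_ring_1)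
    \<Rightarrow> ('a \<Rightarrow> 'p::ab_group_add \<Rightarrow> 'p) \<Rightarrow> ('p \<Rightarrow> 'p \<Rightarrow> 'p) \<Rightarrow> ('p \<Rightarrow> 'a \<Rightarrow> 'a)
    \<Rightarrow> ('a \<Rightarrow> 'q::ab_group_add \<Rightarrow> 'q) \<Rightarrow> ('q \<Rightarrow> 'q \<Rightarrow> 'q) \<Rightarrow> ('q \<Rightarrow> 'a \<Rightarrow> 'a)
    \<Rightarrow> ('p \<Rightarrow> 'q \<Rightarrow> 'q) \<Rightarrow> ('q \<Rightarrow> 'p \<Rightarrow> 'p) \<Rightarrow> bool" where
  "twilled \<iota> sm1 br1 anc1 sm2 br2 anc2 dot12 dot21 \<longleftrightarrow>
     almost_twilled \<iota> sm1 br1 anc1 sm2 br2 anc2 dot12 dot21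
   \<and> is_LR \<iota> UNIV (sum_sm sm1 sm2) (sum_br br1 br2 dot12 dot21) (sum_anc anc1 anc2)"

definition dual_mod :: "('a::comm_ring_1 \<Rightarrow> 'm::ab_group_add \<Rightarrow> 'm) \<Rightarrow> ('m \<Rightarrow> 'a) set" where
  "dual_mod sm = {\<phi>. (\<forall>x y. \<phi> (x + y) = \<phi> x + \<phi> y) \<and> (\<forall>a x. \<phi> (sm a x) = a * \<phi> x)}"

(* Finitely generated projective A-module (dual basis characterisation) *)
definition fg_projective :: "('a::comm_ring_1 \<Rightarrow> 'm::ab_group_add \<Rightarrow> 'm) \<Rightarrow> bool" where
  "fg_projective sm \<longleftrightarrow> (\<exists>(n::nat) (e::nat \<Rightarrow> 'm) (f::nat \<Rightarrow> 'm \<Rightarrow> 'a).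
      (\<forall>i<n. f i \<in> dual_mod sm) \<and> (\<forall>x. x = (\<Sum>i<n. sm (f i x) (e i))))"

definition dual_act :: "('l \<Rightarrow> 'a::comm_ring_1 \<Rightarrow> 'a) \<Rightarrow> ('l \<Rightarrow> 'm \<Rightarrow> 'm) \<Rightarrow> 'l \<Rightarrow> ('m \<Rightarrow> 'a) \<Rightarrow> 'm \<Rightarrow> 'a" where
  "dual_act anc dot x \<phi> = (\<lambda>m. anc x (\<phi> m) - \<phi> (dot x m))"

(* semidirect product L1 |x M^* with M^* abelian *)
definition sdp_sm :: "('a::comm_ring_1 \<Rightarrow> 'l \<Rightarrow> 'l) \<Rightarrow> 'a \<Rightarrow> 'l \<times> ('m \<Rightarrow> 'a) \<Rightarrow> 'l \<times> ('m \<Rightarrow> 'a)" where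
  "sdp_sm sm a u = (sm a (fst u), \<lambda>m. a * snd u m)"

definition sdp_br :: "('l \<Rightarrow> 'l \<Rightarrow> 'l) \<Rightarrow> ('l \<Rightarrow> 'a::comm_ring_1 \<Rightarrow> 'a) \<Rightarrow> ('l \<Rightarrow> 'm \<Rightarrow> 'm)
    \<Rightarrow> 'l \<times> ('m \<Rightarrow> 'a) \<Rightarrow> 'l \<times> ('m \<Rightarrow> 'a) \<Rightarrow> 'l \<times> ('m \<Rightarrow> 'a)" where
  "sdp_br br anc dot u v =
     (br (fst u) (fst v), \<lambda>m. dual_act anc dot (fst u) (snd v) m - dual_act anc dot (fst v) (snd u) m)"

definition sdp_anc :: "('l \<Rightarrow> 'a \<Rightarrow> 'a) \<Rightarrow> 'l \<times> ('m \<Rightarrow> 'a) \<Rightarrow> 'a \<Rightarrow> 'a" where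
  "sdp_anc anc u = anc (fst u)"

(* the duality pairing L x D -> A, L = L' |x L''^*, D = L'' |x L'^*, realising D = Hom_A(L,A) *)
definition pairing_LD :: "'p \<times> ('q \<Rightarrow> 'a::comm_ring_1) \<Rightarrow> 'q \<times> ('p \<Rightarrow> 'a) \<Rightarrow> 'a" where
  "pairing_LD u d = snd u (fst d) + snd d (fst u)"

(* Lambda_A L is realised, via the identification Lambda_A L = Alt_A(D,A) (valid since L is
   f.g. projective), as alternating forms on D; pr is the pairing L x D -> A. *)

definition wedge2 :: "('l \<Rightarrow> 'd \<Rightarrow> 'a::comm_ring_1) \<Rightarrow> 'l \<Rightarrow> 'l \<Rightarrow> 'd \<Rightarrow> 'd \<Rightarrow> 'a" where
  "wedge2 pr \<alpha> \<beta> = (\<lambda>d1 d2. pr \<alpha> d1 * pr \<beta> d2 - pr \<alpha> d2 * pr \<beta> d1)"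

(* Lie-Rinehart (Chevalley-Eilenberg) differential d_* of D applied to the 1-form pr x *)
definition dstar1 :: "('d \<Rightarrow> 'd \<Rightarrow> 'd) \<Rightarrow> ('d \<Rightarrow> 'a::comm_ring_1 \<Rightarrow> 'a) \<Rightarrow> ('l \<Rightarrow> 'd \<Rightarrow> 'a)
    \<Rightarrow> 'l \<Rightarrow> 'd \<Rightarrow> 'd \<Rightarrow> 'a" where
  "dstar1 brD ancD pr x = (\<lambda>d1 d2. ancD d1 (pr x d2) - ancD d2 (pr x d1) - pr x (brD d1 d2))"

(* Gerstenhaber bracket [u, y] for u in Lambda^2 L, y in L: by the defining formula,
   [a1/\a2, y] = [a1,y]/\a2 - [a2,y]/\a1 = [a1,y]/\a2 + a1/\[a2,y], extended additively
   (u written as a finite sum of decomposables). *)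
definition gb_2_1 :: "'l set \<Rightarrow> 'd set \<Rightarrow> ('l \<Rightarrow> 'l \<Rightarrow> 'l) \<Rightarrow> ('l \<Rightarrow> 'd \<Rightarrow> 'a::comm_ring_1)
    \<Rightarrow> ('d \<Rightarrow> 'd \<Rightarrow> 'a) \<Rightarrow> 'l \<Rightarrow> ('d \<Rightarrow> 'd \<Rightarrow> 'a) \<Rightarrow> bool" where
  "gb_2_1 CL CD brL pr u y w \<longleftrightarrow> (\<exists>(n::nat) \<alpha> \<beta>. (\<forall>i<n. \<alpha> i \<in> CL \<and> \<beta> i \<in> CL) \<and>
     (\<forall>d1\<in>CD. \<forall>d2\<in>CD. u d1 d2 = (\<Sum>i<n. wedge2 pr (\<alpha> i) (\<beta> i) d1 d2)
        \<and> w d1 d2 = (\<Sum>i<n. wedge2 pr (brL (\<alpha> i) y) (\<beta> i) d1 d2 + wedge2 pr (\<alpha> i) (brL (\<beta> i) y) d1 d2)))"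

(* Gerstenhaber bracket [x, v] for x in L, v in Lambda^2 L:
   [x, a2/\a3] = [x,a2]/\a3 - [x,a3]/\a2 = [x,a2]/\a3 + a2/\[x,a3]. Relation "w = [x,v]". *)
definition gb_1_2 :: "'l set \<Rightarrow> 'd set \<Rightarrow> ('l \<Rightarrow> 'l \<Rightarrow> 'l) \<Rightarrow> ('l \<Rightarrow> 'd \<Rightarrow> 'a::comm_ring_1)
    \<Rightarrow> 'l \<Rightarrow> ('d \<Rightarrow> 'd \<Rightarrow> 'a) \<Rightarrow> ('d \<Rightarrow> 'd \<Rightarrow> 'a) \<Rightarrow> bool" where
  "gb_1_2 CL CD brL pr x v w \<longleftrightarrow> (\<exists>(n::nat) \<alpha> \<beta>. (\<forall>i<n. \<alpha> i \<in> CL \<and> \<beta> i \<in> CL) \<and>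
     (\<forall>d1\<in>CD. \<forall>d2\<in>CD. v d1 d2 = (\<Sum>i<n. wedge2 pr (\<alpha> i) (\<beta> i) d1 d2)
        \<and> w d1 d2 = (\<Sum>i<n. wedge2 pr (brL x (\<alpha> i)) (\<beta> i) d1 d2 + wedge2 pr (\<alpha> i) (brL x (\<beta> i)) d1 d2)))"

definition LR_bialgebra :: "('r::comm_ring_1 \<Rightarrow> 'a::comm_ring_1)
    \<Rightarrow> 'l::ab_group_add set \<Rightarrow> ('a \<Rightarrow> 'l \<Rightarrow> 'l) \<Rightarrow> ('l \<Rightarrow> 'l \<Rightarrow> 'l) \<Rightarrow> ('l \<Rightarrow> 'a \<Rightarrow> 'a)
    \<Rightarrow> 'd::ab_group_add set \<Rightarrow> ('a \<Rightarrow> 'd \<Rightarrow> 'd) \<Rightarrow> ('d \<Rightarrow> 'd \<Rightarrow> 'd) \<Rightarrow> ('d \<Rightarrow> 'a \<Rightarrow> 'a)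
    \<Rightarrow> ('l \<Rightarrow> 'd \<Rightarrow> 'a) \<Rightarrow> bool" where
  "LR_bialgebra \<iota> CL smL brL ancL CD smD brD ancD pr \<longleftrightarrow>
     is_LR \<iota> CL smL brL ancL \<and> is_LR \<iota> CD smD brD ancD
   \<and> (\<forall>x\<in>CL. \<forall>y\<in>CL. \<exists>w1 w2.
        gb_2_1 CL CD brL pr (dstar1 brD ancD pr x) y w1
      \<and> gb_1_2 CL CD brL pr x (dstar1 brD ancD pr y) w2
      \<and> (\<forall>d1\<in>CD. \<forall>d2\<in>CD. dstar1 brD ancD pr (brL x y) d1 d2 = w1 d1 d2 + w2 d1 d2))"

end

theory Submission
  imports Defs "HOL.Modules"
begin

text \<open>
  The bracket on \<open>L' \<oplus> L''\<close> is a Lie-Rinehart structure iff three mixed defects vanish: the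
  \<open>L'\<close>- and \<open>L''\<close>-components of its Jacobiator on mixed triples and the failure of its anchor to
  be a Lie map on mixed brackets (a matched pair). On the other side, the Gerstenhaber brackets
  \<open>[d\<^sub>* X, Y]\<close> and \<open>[X, d\<^sub>* Y]\<close> are Lie derivatives of 2-forms on \<open>D = Hom\<^sub>A(L, A)\<close>, and
  every \<open>d\<^sub>* X\<close> is a finite sum of wedges because \<open>L'\<close> and \<open>L''\<close> are finitely generated
  projective; so \<open>(A, L, D)\<close> is a bialgebra iff \<open>d\<^sub>*[X, Y] = L\<^sub>X d\<^sub>* Y - L\<^sub>Y d\<^sub>* X\<close>.
  Evaluated at \<open>X = (x, \<phi>)\<close>, \<open>Y = (y, \<chi>)\<close> and \<open>(\<xi>, \<alpha>), (\<eta>, \<beta>) \<in> D\<close>, the difference of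
  both sides is an explicit linear combination of the three defects. Since the dual of a finitely
  generated projective module separates points, testing against suitable \<open>\<alpha>, \<beta>, \<phi>, \<chi>\<close>
  recovers the two Jacobiator defects; the anchor defect vanishes as soon as the first one does,
  because \<open>(anchor_defect x \<xi> a) \<cdot> y\<close> is expressed through it and a linear form whose values
  annihilate a finitely generated projective module is zero.
\<close>

lemma A_module_UNIV_simps:
  assumes "A_module UNIV sm"
  shows "sm a (x + y) = sm a x + sm a y" "sm (a + b) x = sm a x + sm b x"
    "sm (a * b) x = sm a (sm b x)" "sm 1 x = x"
    "sm a 0 = 0" "sm a (- x) = - sm a x" "sm a (x - y) = sm a x - sm a y"
    "sm 0 x = 0" "sm (- a) x = - sm a x" "sm (a - b) x = sm a x - sm b x"
proof -
  interpret right: additive "sm a" for a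
    by unfold_locales (use assms in \<open>simp add: A_module_def\<close>)
  interpret left: additive "\<lambda>a. sm a x" for x
    by unfold_locales (use assms in \<open>simp add: A_module_def\<close>)
  show "sm a (x + y) = sm a x + sm a y" "sm (a + b) x = sm a x + sm b x"
    "sm a 0 = 0" "sm a (- x) = - sm a x" "sm a (x - y) = sm a x - sm a y"
    "sm 0 x = 0" "sm (- a) x = - sm a x" "sm (a - b) x = sm a x - sm b x"
    using right.add right.zero right.minus right.diff left.add left.zero left.minus left.diff
    by simp_all
  show "sm (a * b) x = sm a (sm b x)" "sm 1 x = x"
    using assms unfolding A_module_def by blast+
qed

lemma R_derivation_simps:
  assumes "R_derivation \<iota> \<delta>"
  shows "\<delta> (a + b) = \<delta> a + \<delta> b" "\<delta> (a * b) = a * \<delta> b + b * \<delta> a"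
    "\<delta> 0 = 0" "\<delta> (- a) = - \<delta> a" "\<delta> (a - b) = \<delta> a - \<delta> b"
    "\<delta> (\<iota> r * a) = \<iota> r * \<delta> a" "\<delta> 1 = 0" "\<delta> (\<iota> r) = 0"
proof -
  interpret additive \<delta>
    by unfold_locales (use assms in \<open>simp add: R_derivation_def\<close>)
  have leibniz: "\<delta> (a * b) = a * \<delta> b + b * \<delta> a" for a b
    using assms unfolding R_derivation_def by blast
  have linear: "\<delta> (\<iota> r * a) = \<iota> r * \<delta> a" for r a
    using assms unfolding R_derivation_def by blast
  have one: "\<delta> 1 = 0"
    using leibniz[of 1 1] by simp
  show "\<delta> (a + b) = \<delta> a + \<delta> b" "\<delta> 0 = 0" "\<delta> (- a) = - \<delta> a" "\<delta> (a - b) = \<delta> a - \<delta> b"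
    by (simp_all add: add zero minus diff)
  show "\<delta> (a * b) = a * \<delta> b + b * \<delta> a" "\<delta> (\<iota> r * a) = \<iota> r * \<delta> a" "\<delta> 1 = 0"
    by (fact leibniz linear one)+
  show "\<delta> (\<iota> r) = 0"
    using linear[of r 1] one by simp
qed

lemma is_LR_UNIV_A_module: "is_LR \<iota> UNIV sm br anc \<Longrightarrow> A_module UNIV sm"
  by (simp add: is_LR_def)

lemma is_LR_UNIV_derivation: "is_LR \<iota> UNIV sm br anc \<Longrightarrow> R_derivation \<iota> (anc x)"
  by (simp add: is_LR_def)

lemma is_LR_UNIV_simps:
  assumes "is_LR \<iota> UNIV sm br anc"
  shows "br (x + y) z = br x z + br y z" "br x (y + z) = br x y + br x z"
    "br 0 x = 0" "br x 0 = 0" "br (- x) y = - br x y" "br x (- y) = - br x y"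
    "br (x - y) z = br x z - br y z" "br x (y - z) = br x y - br x z"
    "br (sm (\<iota> r) x) y = sm (\<iota> r) (br x y)" "br x (sm (\<iota> r) y) = sm (\<iota> r) (br x y)"
    "br x x = 0"
    "anc (x + y) a = anc x a + anc y a" "anc 0 a = 0" "anc (- x) a = - anc x a"
    "anc (x - y) a = anc x a - anc y a"
    "anc (br x y) a = anc x (anc y a) - anc y (anc x a)"
    "anc (sm a x) b = a * anc x b"
    "br x (sm a y) = sm (anc x a) y + sm a (br x y)"
proof -
  interpret left: additive "\<lambda>x. br x z" for z
    by unfold_locales (use assms in \<open>simp add: is_LR_def\<close>)
  interpret right: additive "br x" for x
    by unfold_locales (use assms in \<open>simp add: is_LR_def\<close>)
  interpret anchor: additive "\<lambda>x. anc x a" for a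
    by unfold_locales (use assms in \<open>simp add: is_LR_def\<close>)
  show "br (x + y) z = br x z + br y z" "br x (y + z) = br x y + br x z"
    "br 0 x = 0" "br x 0 = 0" "br (- x) y = - br x y" "br x (- y) = - br x y"
    "br (x - y) z = br x z - br y z" "br x (y - z) = br x y - br x z"
    "anc (x + y) a = anc x a + anc y a" "anc 0 a = 0" "anc (- x) a = - anc x a"
    "anc (x - y) a = anc x a - anc y a"
    using left.add left.zero left.minus left.diff right.add right.zero right.minus right.diff
      anchor.add anchor.zero anchor.minus anchor.diff
    by simp_all
  show "br (sm (\<iota> r) x) y = sm (\<iota> r) (br x y)" "br x (sm (\<iota> r) y) = sm (\<iota> r) (br x y)"
    "br x x = 0" "anc (br x y) a = anc x (anc y a) - anc y (anc x a)"
    "anc (sm a x) b = a * anc x b" "br x (sm a y) = sm (anc x a) y + sm a (br x y)"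
    using assms unfolding is_LR_def by auto
qed

lemma is_LR_antisym:
  assumes "is_LR \<iota> UNIV sm br anc"
  shows "br x y = - br y x"
proof -
  note simps = is_LR_UNIV_simps[OF assms]
  have "br x y + br y x = br x x + br x y + (br y x + br y y)"
    by (simp add: simps(11))
  also have "\<dots> = br (x + y) (x + y)"
    by (simp add: simps(1,2) ac_simps)
  also have "\<dots> = 0"
    by (simp add: simps(11))
  finally show ?thesis
    by (simp add: eq_neg_iff_add_eq_0)
qed

lemma is_LR_bracket_scale_left:
  assumes "is_LR \<iota> UNIV sm br anc"
  shows "br (sm a x) y = sm a (br x y) - sm (anc y a) x"
  using is_LR_antisym[OF assms, of "sm a x" y] is_LR_antisym[OF assms, of x y]
  by (simp add: is_LR_UNIV_simps[OF assms] A_module_UNIV_simps[OF is_LR_UNIV_A_module[OF assms]])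

lemma is_LR_jacobi:
  "is_LR \<iota> UNIV sm br anc \<Longrightarrow> br x (br y z) + br y (br z x) + br z (br x y) = 0"
  by (simp add: is_LR_def)

lemma is_LR_module_UNIV_simps:
  assumes "is_LR_module \<iota> UNIV sm br anc UNIV smM act"
  shows "act (x + y) m = act x m + act y m" "act x (m + n) = act x m + act x n"
    "act 0 m = 0" "act x 0 = 0" "act (- x) m = - act x m" "act x (- m) = - act x m"
    "act (x - y) m = act x m - act y m" "act x (m - n) = act x m - act x n"
    "act (sm (\<iota> r) x) m = smM (\<iota> r) (act x m)" "act x (smM (\<iota> r) m) = smM (\<iota> r) (act x m)"
    "act (br x y) m = act x (act y m) - act y (act x m)"
    "act (sm a x) m = smM a (act x m)"
    "act x (smM a m) = smM (anc x a) m + smM a (act x m)"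
proof -
  interpret left: additive "\<lambda>x. act x m" for m
    by unfold_locales (use assms in \<open>simp add: is_LR_module_def\<close>)
  interpret right: additive "act x" for x
    by unfold_locales (use assms in \<open>simp add: is_LR_module_def\<close>)
  show "act (x + y) m = act x m + act y m" "act x (m + n) = act x m + act x n"
    "act 0 m = 0" "act x 0 = 0" "act (- x) m = - act x m" "act x (- m) = - act x m"
    "act (x - y) m = act x m - act y m" "act x (m - n) = act x m - act x n"
    using left.add left.zero left.minus left.diff right.add right.zero right.minus right.diff
    by simp_all
  show "act (sm (\<iota> r) x) m = smM (\<iota> r) (act x m)" "act x (smM (\<iota> r) m) = smM (\<iota> r) (act x m)"
    "act (br x y) m = act x (act y m) - act y (act x m)"
    "act (sm a x) m = smM a (act x m)"
    "act x (smM a m) = smM (anc x a) m + smM a (act x m)"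
    using assms unfolding is_LR_module_def by blast+
qed

lemma is_LR_module_UNIV_A_module: "is_LR_module \<iota> UNIV sm br anc UNIV smM act \<Longrightarrow> A_module UNIV smM"
  by (simp add: is_LR_module_def)

lemma dual_modI:
  "(\<And>x y. \<phi> (x + y) = \<phi> x + \<phi> y) \<Longrightarrow> (\<And>a x. \<phi> (sm a x) = a * \<phi> x) \<Longrightarrow> \<phi> \<in> dual_mod sm"
  by (simp add: dual_mod_def)

lemma dual_mod_simps:
  assumes "\<phi> \<in> dual_mod sm"
  shows "\<phi> (x + y) = \<phi> x + \<phi> y" "\<phi> (sm a x) = a * \<phi> x" "\<phi> 0 = 0" "\<phi> (- x) = - \<phi> x"
    "\<phi> (x - y) = \<phi> x - \<phi> y" "\<phi> (sum g I) = (\<Sum>i\<in>I. \<phi> (g i))"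
proof -
  interpret additive \<phi>
    by unfold_locales (use assms in \<open>simp add: dual_mod_def\<close>)
  show "\<phi> (x + y) = \<phi> x + \<phi> y" "\<phi> 0 = 0" "\<phi> (- x) = - \<phi> x" "\<phi> (x - y) = \<phi> x - \<phi> y"
    "\<phi> (sum g I) = (\<Sum>i\<in>I. \<phi> (g i))"
    by (simp_all add: add zero minus diff sum)
  show "\<phi> (sm a x) = a * \<phi> x"
    using assms unfolding dual_mod_def by blast
qed

lemma dual_mod_zero: "0 \<in> dual_mod sm"
  by (simp add: dual_mod_def)

lemma dual_mod_add: "\<phi> \<in> dual_mod sm \<Longrightarrow> \<psi> \<in> dual_mod sm \<Longrightarrow> \<phi> + \<psi> \<in> dual_mod sm"
  by (rule dual_modI) (simp_all add: dual_mod_simps algebra_simps)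

lemma dual_mod_uminus: "\<phi> \<in> dual_mod sm \<Longrightarrow> - \<phi> \<in> dual_mod sm"
  by (rule dual_modI) (simp_all add: dual_mod_simps algebra_simps)

lemma dual_mod_diff: "\<phi> \<in> dual_mod sm \<Longrightarrow> \<psi> \<in> dual_mod sm \<Longrightarrow> (\<lambda>m. \<phi> m - \<psi> m) \<in> dual_mod sm"
  by (rule dual_modI) (simp_all add: dual_mod_simps algebra_simps)

lemma dual_mod_scale: "\<phi> \<in> dual_mod sm \<Longrightarrow> (\<lambda>m. a * \<phi> m) \<in> dual_mod sm"
  by (rule dual_modI) (simp_all add: dual_mod_simps algebra_simps)

lemma dual_mod_lincomb:
  assumes "\<And>i. i \<in> I \<Longrightarrow> \<phi> i \<in> dual_mod sm"
  shows "(\<lambda>m. \<Sum>i\<in>I. c i * \<phi> i m) \<in> dual_mod sm"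
proof (rule dual_modI)
  show "(\<Sum>i\<in>I. c i * \<phi> i (x + y)) = (\<Sum>i\<in>I. c i * \<phi> i x) + (\<Sum>i\<in>I. c i * \<phi> i y)" for x y
    by (simp add: dual_mod_simps[OF assms] distrib_left sum.distrib cong: sum.cong)
  show "(\<Sum>i\<in>I. c i * \<phi> i (sm a x)) = a * (\<Sum>i\<in>I. c i * \<phi> i x)" for a x
    by (simp add: dual_mod_simps[OF assms] sum_distrib_left algebra_simps cong: sum.cong)
qed

lemma fg_projective_eq_zeroI:
  assumes "fg_projective sm" and "A_module UNIV sm"
    and "\<And>\<phi>. \<phi> \<in> dual_mod sm \<Longrightarrow> \<phi> u = 0"
  shows "u = 0"
proof -
  obtain n e f where f: "\<forall>i<(n::nat). f i \<in> dual_mod sm" and basis: "\<forall>x. x = (\<Sum>i<n. sm (f i x) (e i))"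
    using assms(1) unfolding fg_projective_def by blast
  have "u = (\<Sum>i<n. sm (f i u) (e i))"
    using basis by blast
  also have "\<dots> = (\<Sum>i<n. sm 0 (e i))"
  proof (intro sum.cong refl)
    fix i assume "i \<in> {..<n}"
    then have "f i u = 0"
      using f assms(3) by blast
    then show "sm (f i u) (e i) = sm 0 (e i)"
      by simp
  qed
  also have "\<dots> = 0"
    by (simp add: A_module_UNIV_simps[OF assms(2)])
  finally show ?thesis .
qed

lemma fg_projective_dual_eq_zeroI:
  assumes "fg_projective sm" and \<kappa>: "\<kappa> \<in> dual_mod sm" and annihilates: "\<And>e x. sm (\<kappa> e) x = 0"
  shows "\<kappa> x = 0"
proof -
  obtain n e f where f: "\<forall>i<(n::nat). f i \<in> dual_mod sm" and basis: "\<forall>x. x = (\<Sum>i<n. sm (f i x) (e i))"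
    using assms(1) unfolding fg_projective_def by blast
  have "\<kappa> x = \<kappa> (\<Sum>i<n. sm (f i x) (e i))"
    using basis by metis
  also have "\<dots> = (\<Sum>i<n. f i x * \<kappa> (e i))"
    by (simp add: dual_mod_simps[OF \<kappa>])
  also have "\<dots> = (\<Sum>i<n. f i (sm (\<kappa> (e i)) x))"
    using f by (intro sum.cong) (simp_all add: dual_mod_simps mult.commute)
  also have "\<dots> = 0"
  proof (intro sum.neutral ballI)
    fix i assume "i \<in> {..<n}"
    then have "f i \<in> dual_mod sm"
      using f by blast
    then show "f i (sm (\<kappa> (e i)) x) = 0"
      by (simp add: annihilates dual_mod_simps)
  qed
  finally show ?thesis .
qed

lemma sum_lessThan_add: "(\<Sum>k<m + (n::nat). F k) = (\<Sum>k<m. F k) + (\<Sum>k<n. F (m + k))"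
  by (induction n) (simp_all add: algebra_simps)

lemma sum_square_antisymmetric:
  fixes c :: "nat \<Rightarrow> nat \<Rightarrow> 'a::comm_ring"
  assumes antisym: "\<And>j l. c j l = - c l j" and diag: "\<And>j. c j j = 0"
  shows "(\<Sum>j<n. \<Sum>l<n. c j l * (a j * b l)) = (\<Sum>j<n. \<Sum>l\<in>{j<..<n}. c j l * (a j * b l - a l * b j))"
proof (induction n)
  case 0
  then show ?case by simp
next
  case (Suc n)
  have split: "{j<..<Suc n} = insert n {j<..<n}" if "j < n" for j
    using that by auto
  have empty: "{n<..<Suc n} = {}"
    by auto
  have "(\<Sum>j<Suc n. \<Sum>l\<in>{j<..<Suc n}. c j l * (a j * b l - a l * b j))
     = (\<Sum>j<n. (\<Sum>l\<in>{j<..<n}. c j l * (a j * b l - a l * b j)) + c j n * (a j * b n - a n * b j))"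
    by (simp add: split empty add.commute)
  also have "\<dots> = (\<Sum>j<n. \<Sum>l<n. c j l * (a j * b l)) + (\<Sum>j<n. c j n * (a j * b n - a n * b j))"
    by (simp add: sum.distrib Suc)
  also have "\<dots> = (\<Sum>j<n. \<Sum>l<n. c j l * (a j * b l))
     + (\<Sum>j<n. c j n * (a j * b n)) + (\<Sum>l<n. c n l * (a n * b l))"
  proof -
    have "(\<Sum>l<n. c n l * (a n * b l)) = - (\<Sum>j<n. c j n * (a n * b j))"
      by (simp add: antisym[of n] sum_negf)
    then show ?thesis
      by (simp add: right_diff_distrib sum_subtractf sum.distrib)
  qed
  also have "\<dots> = (\<Sum>j<Suc n. \<Sum>l<Suc n. c j l * (a j * b l))"
    by (simp add: sum.distrib diag)
  finally show ?case ..
qed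

lemma alternating_form_expansion:
  fixes \<Phi> :: "'m::ab_group_add \<Rightarrow> 'm \<Rightarrow> 'a::comm_ring_1" and n :: nat
  assumes f: "\<And>i. i < n \<Longrightarrow> f i \<in> dual_mod sm" and basis: "\<And>x. x = (\<Sum>i<n. sm (f i x) (e i))"
    and linear: "\<And>\<eta>. (\<lambda>\<xi>. \<Phi> \<xi> \<eta>) \<in> dual_mod sm"
    and antisym: "\<And>\<xi> \<eta>. \<Phi> \<xi> \<eta> = - \<Phi> \<eta> \<xi>" and alternating: "\<And>\<xi>. \<Phi> \<xi> \<xi> = 0"
  shows "\<Phi> \<xi> \<eta> = (\<Sum>j<n. \<Sum>l\<in>{j<..<n}. \<Phi> (e j) (e l) * (f j \<xi> * f l \<eta> - f l \<xi> * f j \<eta>))"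
proof -
  have linear': "(\<lambda>\<eta>. \<Phi> \<xi> \<eta>) \<in> dual_mod sm" for \<xi>
    by (rule dual_modI) (simp_all add: antisym[of \<xi>] dual_mod_simps[OF linear])
  have "\<Phi> \<xi> \<eta> = (\<Sum>j<n. f j \<xi> * \<Phi> (e j) \<eta>)"
    by (subst basis[of \<xi>]) (simp add: dual_mod_simps[OF linear])
  also have "\<dots> = (\<Sum>j<n. \<Sum>l<n. \<Phi> (e j) (e l) * (f j \<xi> * f l \<eta>))"
    by (subst basis[of \<eta>]) (simp add: dual_mod_simps[OF linear'] sum_distrib_left algebra_simps)
  also have "\<dots> = (\<Sum>j<n. \<Sum>l\<in>{j<..<n}. \<Phi> (e j) (e l) * (f j \<xi> * f l \<eta> - f l \<xi> * f j \<eta>))"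
    by (rule sum_square_antisymmetric[where c = "\<lambda>j l. \<Phi> (e j) (e l)"])
      (rule antisym, rule alternating)
  finally show ?thesis .
qed

lemma dual_act_in_dual_mod:
  assumes L: "is_LR \<iota> UNIV sm br anc" and M: "is_LR_module \<iota> UNIV sm br anc UNIV smM act"
    and \<phi>: "\<phi> \<in> dual_mod smM"
  shows "dual_act anc act x \<phi> \<in> dual_mod smM"
  by (rule dual_modI)
    (simp_all add: dual_act_def dual_mod_simps[OF \<phi>] is_LR_module_UNIV_simps[OF M]
      R_derivation_simps[OF is_LR_UNIV_derivation[OF L]] algebra_simps)

lemma A_module_semidirect:
  assumes "A_module UNIV sm"
  shows "A_module (UNIV \<times> dual_mod smM) (sdp_sm sm)"
  unfolding A_module_def
  by (auto simp: zero_prod_def sdp_sm_def A_module_UNIV_simps[OF assms] algebra_simps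
      dual_mod_zero dual_mod_add dual_mod_uminus dual_mod_scale)

lemma is_LR_semidirect:
  fixes sm :: "'a::comm_ring_1 \<Rightarrow> 'l::ab_group_add \<Rightarrow> 'l" and smM :: "'a \<Rightarrow> 'm::ab_group_add \<Rightarrow> 'm"
  assumes L: "is_LR \<iota> UNIV sm br anc" and M: "is_LR_module \<iota> UNIV sm br anc UNIV smM act"
  shows "is_LR \<iota> (UNIV \<times> dual_mod smM) (sdp_sm sm) (sdp_br br anc act) (sdp_anc anc)"
  unfolding is_LR_def
proof (intro conjI ballI allI)
  show "A_module (UNIV \<times> dual_mod smM) (sdp_sm sm)"
    by (rule A_module_semidirect[OF is_LR_UNIV_A_module[OF L]])
  fix X Y Z :: "'l \<times> ('m \<Rightarrow> 'a)"
  assume "X \<in> UNIV \<times> dual_mod smM" "Y \<in> UNIV \<times> dual_mod smM" "Z \<in> UNIV \<times> dual_mod smM"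
  then obtain x \<phi> y \<psi> z \<chi> where XYZ: "X = (x, \<phi>)" "Y = (y, \<psi>)" "Z = (z, \<chi>)"
    and \<phi>: "\<phi> \<in> dual_mod smM" and \<psi>: "\<psi> \<in> dual_mod smM" and \<chi>: "\<chi> \<in> dual_mod smM"
    by blast
  note simps = XYZ sdp_br_def sdp_sm_def sdp_anc_def dual_act_def
    dual_mod_simps[OF \<phi>] dual_mod_simps[OF \<psi>] dual_mod_simps[OF \<chi>]
    is_LR_UNIV_simps[OF L] R_derivation_simps[OF is_LR_UNIV_derivation[OF L]]
    is_LR_module_UNIV_simps[OF M] A_module_UNIV_simps[OF is_LR_UNIV_A_module[OF L]]
    A_module_UNIV_simps[OF is_LR_module_UNIV_A_module[OF M]]
  show "sdp_br br anc act X Y \<in> UNIV \<times> dual_mod smM"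
    using dual_mod_diff[OF dual_act_in_dual_mod[OF L M \<psi>] dual_act_in_dual_mod[OF L M \<phi>]]
    by (simp add: XYZ sdp_br_def)
  show "sdp_br br anc act (X + Y) Z = sdp_br br anc act X Z + sdp_br br anc act Y Z"
    "sdp_br br anc act X (Y + Z) = sdp_br br anc act X Y + sdp_br br anc act X Z"
    "sdp_br br anc act X X = 0"
    by (auto simp: simps zero_prod_def algebra_simps)
  show "sdp_br br anc act X (sdp_br br anc act Y Z) + sdp_br br anc act Y (sdp_br br anc act Z X) +
      sdp_br br anc act Z (sdp_br br anc act X Y) = 0"
    using is_LR_jacobi[OF L, of x y z] by (auto simp: simps zero_prod_def algebra_simps)
  show "R_derivation \<iota> (sdp_anc anc X)"
    by (simp add: XYZ sdp_anc_def is_LR_UNIV_derivation[OF L])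
  fix r a b
  show "sdp_br br anc act (sdp_sm sm (\<iota> r) X) Y = sdp_sm sm (\<iota> r) (sdp_br br anc act X Y)"
    "sdp_br br anc act X (sdp_sm sm (\<iota> r) Y) = sdp_sm sm (\<iota> r) (sdp_br br anc act X Y)"
    "sdp_br br anc act X (sdp_sm sm a Y) = sdp_sm sm (sdp_anc anc X a) Y + sdp_sm sm a (sdp_br br anc act X Y)"
    by (auto simp: simps algebra_simps)
  show "sdp_anc anc (X + Y) a = sdp_anc anc X a + sdp_anc anc Y a"
    "sdp_anc anc (sdp_sm sm (\<iota> r) X) a = \<iota> r * sdp_anc anc X a"
    "sdp_anc anc (sdp_br br anc act X Y) a = sdp_anc anc X (sdp_anc anc Y a) - sdp_anc anc Y (sdp_anc anc X a)"
    "sdp_anc anc (sdp_sm sm a X) b = a * sdp_anc anc X b"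
    by (simp_all add: simps)
qed

locale almost_twilled_LR =
  fixes \<iota> :: "'r::comm_ring_1 \<Rightarrow> 'a::comm_ring_1"
    and sm1 :: "'a \<Rightarrow> 'p::ab_group_add \<Rightarrow> 'p" and br1 :: "'p \<Rightarrow> 'p \<Rightarrow> 'p" and anc1 :: "'p \<Rightarrow> 'a \<Rightarrow> 'a"
    and sm2 :: "'a \<Rightarrow> 'q::ab_group_add \<Rightarrow> 'q" and br2 :: "'q \<Rightarrow> 'q \<Rightarrow> 'q" and anc2 :: "'q \<Rightarrow> 'a \<Rightarrow> 'a"
    and dot12 :: "'p \<Rightarrow> 'q \<Rightarrow> 'q" and dot21 :: "'q \<Rightarrow> 'p \<Rightarrow> 'p"
  assumes almost_twilled: "almost_twilled \<iota> sm1 br1 anc1 sm2 br2 anc2 dot12 dot21"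
begin

lemma LR1: "is_LR \<iota> UNIV sm1 br1 anc1"
  and LR2: "is_LR \<iota> UNIV sm2 br2 anc2"
  and module12: "is_LR_module \<iota> UNIV sm1 br1 anc1 UNIV sm2 dot12"
  and module21: "is_LR_module \<iota> UNIV sm2 br2 anc2 UNIV sm1 dot21"
  using almost_twilled unfolding almost_twilled_def by auto

lemmas structure_simps =
  is_LR_UNIV_simps[OF LR1] is_LR_UNIV_simps[OF LR2]
  R_derivation_simps[OF is_LR_UNIV_derivation[OF LR1]] R_derivation_simps[OF is_LR_UNIV_derivation[OF LR2]]
  is_LR_module_UNIV_simps[OF module12] is_LR_module_UNIV_simps[OF module21]
  A_module_UNIV_simps[OF is_LR_UNIV_A_module[OF LR1]] A_module_UNIV_simps[OF is_LR_UNIV_A_module[OF LR2]]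

text \<open>
  The \<open>L'\<close>-component of the Jacobiator of the bracket on \<open>L' \<oplus> L''\<close> at \<open>(x, y, \<eta>)\<close>, its
  \<open>L''\<close>-component at \<open>(x, \<xi>, \<eta>)\<close>, and the defect of \<open>[anc x, anc \<xi>] = anc [x, \<xi>]\<close>.
\<close>

definition jacobiator' :: "'p \<Rightarrow> 'p \<Rightarrow> 'q \<Rightarrow> 'p" where
  "jacobiator' x y \<eta> = dot21 \<eta> (br1 x y)
     - (br1 x (dot21 \<eta> y) - br1 y (dot21 \<eta> x) + dot21 (dot12 y \<eta>) x - dot21 (dot12 x \<eta>) y)"

definition jacobiator'' :: "'p \<Rightarrow> 'q \<Rightarrow> 'q \<Rightarrow> 'q" where
  "jacobiator'' x \<xi> \<eta> = dot12 x (br2 \<xi> \<eta>)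
     - (br2 \<xi> (dot12 x \<eta>) - br2 \<eta> (dot12 x \<xi>) + dot12 (dot21 \<eta> x) \<xi> - dot12 (dot21 \<xi> x) \<eta>)"

definition anchor_defect :: "'p \<Rightarrow> 'q \<Rightarrow> 'a \<Rightarrow> 'a" where
  "anchor_defect x \<xi> a = anc2 (dot12 x \<xi>) a - (anc1 x (anc2 \<xi> a) - anc2 \<xi> (anc1 x a) + anc1 (dot21 \<xi> x) a)"

definition matched_pair :: bool where
  "matched_pair \<longleftrightarrow> (\<forall>x y \<eta>. jacobiator' x y \<eta> = 0) \<and> (\<forall>x \<xi> \<eta>. jacobiator'' x \<xi> \<eta> = 0)
     \<and> (\<forall>x \<xi> a. anchor_defect x \<xi> a = 0)"

lemma anchor_defect_in_dual_mod: "(\<lambda>x. anchor_defect x \<xi> a) \<in> dual_mod sm1"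
  by (rule dual_modI) (simp_all add: anchor_defect_def structure_simps algebra_simps)

lemma scale_anchor_defect:
  "sm1 (anchor_defect x \<xi> a) y = jacobiator' x (sm1 a y) \<xi> - sm1 a (jacobiator' x y \<xi>)"
  unfolding anchor_defect_def jacobiator'_def
  by (simp add: structure_simps is_LR_bracket_scale_left[OF LR1] algebra_simps)

lemma anchor_defect_eq_zero:
  assumes "fg_projective sm1" and "\<And>x y \<eta>. jacobiator' x y \<eta> = 0"
  shows "anchor_defect x \<xi> a = 0"
  using fg_projective_dual_eq_zeroI[OF assms(1) anchor_defect_in_dual_mod]
  by (simp add: scale_anchor_defect assms(2) structure_simps)

abbreviation "twilled_bracket \<equiv> sum_br br1 br2 dot12 dot21"

lemma LR_sum_imp_matched_pair:
  assumes LR: "is_LR \<iota> UNIV (sum_sm sm1 sm2) twilled_bracket (sum_anc anc1 anc2)"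
  shows matched_pair
  unfolding matched_pair_def
proof (intro conjI allI)
  fix x y :: 'p and \<xi> \<eta> :: 'q and a :: 'a
  have "fst (twilled_bracket (x, 0) (twilled_bracket (y, 0) (0, \<eta>))
      + twilled_bracket (y, 0) (twilled_bracket (0, \<eta>) (x, 0))
      + twilled_bracket (0, \<eta>) (twilled_bracket (x, 0) (y, 0))) = 0"
    using is_LR_jacobi[OF LR] by simp
  then show "jacobiator' x y \<eta> = 0"
    by (simp add: jacobiator'_def sum_br_def structure_simps algebra_simps)
  have "snd (twilled_bracket (0, \<xi>) (twilled_bracket (0, \<eta>) (x, 0))
      + twilled_bracket (0, \<eta>) (twilled_bracket (x, 0) (0, \<xi>))
      + twilled_bracket (x, 0) (twilled_bracket (0, \<xi>) (0, \<eta>))) = 0"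
    using is_LR_jacobi[OF LR] by simp
  then show "jacobiator'' x \<xi> \<eta> = 0"
    by (simp add: jacobiator''_def sum_br_def structure_simps algebra_simps)
  have "sum_anc anc1 anc2 (twilled_bracket (x, 0) (0, \<xi>)) a
      = sum_anc anc1 anc2 (x, 0) (sum_anc anc1 anc2 (0, \<xi>) a) - sum_anc anc1 anc2 (0, \<xi>) (sum_anc anc1 anc2 (x, 0) a)"
    using LR by (simp add: is_LR_def)
  then show "anchor_defect x \<xi> a = 0"
    by (simp add: anchor_defect_def sum_br_def sum_anc_def structure_simps algebra_simps)
qed

lemma matched_pair_imp_LR_sum:
  assumes matched_pair
  shows "is_LR \<iota> UNIV (sum_sm sm1 sm2) twilled_bracket (sum_anc anc1 anc2)"
  unfolding is_LR_def
proof (intro conjI ballI allI)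
  have jac1: "dot21 \<eta> (br1 x y) = br1 x (dot21 \<eta> y) - br1 y (dot21 \<eta> x)
      + dot21 (dot12 y \<eta>) x - dot21 (dot12 x \<eta>) y" for x y \<eta>
    using assms unfolding matched_pair_def jacobiator'_def by (metis eq_iff_diff_eq_0)
  have jac2: "dot12 x (br2 \<xi> \<eta>) = br2 \<xi> (dot12 x \<eta>) - br2 \<eta> (dot12 x \<xi>)
      + dot12 (dot21 \<eta> x) \<xi> - dot12 (dot21 \<xi> x) \<eta>" for x \<xi> \<eta>
    using assms unfolding matched_pair_def jacobiator''_def by (metis eq_iff_diff_eq_0)
  have anchor: "anc2 (dot12 x \<xi>) a = anc1 x (anc2 \<xi> a) - anc2 \<xi> (anc1 x a) + anc1 (dot21 \<xi> x) a"
    for x \<xi> a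
    using assms unfolding matched_pair_def anchor_defect_def by (metis eq_iff_diff_eq_0)
  show "A_module UNIV (sum_sm sm1 sm2)"
    unfolding A_module_def by (auto simp: sum_sm_def structure_simps)
  fix u v w :: "'p \<times> 'q" and r a b
  obtain x \<xi> y \<eta> z \<zeta> where uvw: "u = (x, \<xi>)" "v = (y, \<eta>)" "w = (z, \<zeta>)"
    by (cases u, cases v, cases w) blast
  note simps = uvw sum_sm_def sum_br_def sum_anc_def structure_simps
  show "twilled_bracket u v \<in> UNIV"
    by simp
  show "twilled_bracket (u + v) w = twilled_bracket u w + twilled_bracket v w"
    "twilled_bracket u (v + w) = twilled_bracket u v + twilled_bracket u w"
    "twilled_bracket (sum_sm sm1 sm2 (\<iota> r) u) v = sum_sm sm1 sm2 (\<iota> r) (twilled_bracket u v)"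
    "twilled_bracket u (sum_sm sm1 sm2 (\<iota> r) v) = sum_sm sm1 sm2 (\<iota> r) (twilled_bracket u v)"
    "twilled_bracket u (sum_sm sm1 sm2 a v)
       = sum_sm sm1 sm2 (sum_anc anc1 anc2 u a) v + sum_sm sm1 sm2 a (twilled_bracket u v)"
    by (simp_all add: simps algebra_simps)
  show "twilled_bracket u u = 0"
    by (simp add: simps zero_prod_def)
  show "twilled_bracket u (twilled_bracket v w) + twilled_bracket v (twilled_bracket w u)
      + twilled_bracket w (twilled_bracket u v) = 0"
    using is_LR_jacobi[OF LR1, of x y z] is_LR_jacobi[OF LR2, of \<xi> \<eta> \<zeta>]
    by (simp add: simps jac1 jac2 zero_prod_def algebra_simps)
  show "R_derivation \<iota> (sum_anc anc1 anc2 u)"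
    unfolding R_derivation_def by (simp add: simps algebra_simps)
  show "sum_anc anc1 anc2 (u + v) a = sum_anc anc1 anc2 u a + sum_anc anc1 anc2 v a"
    "sum_anc anc1 anc2 (sum_sm sm1 sm2 (\<iota> r) u) a = \<iota> r * sum_anc anc1 anc2 u a"
    "sum_anc anc1 anc2 (sum_sm sm1 sm2 a u) b = a * sum_anc anc1 anc2 u b"
    by (simp_all add: simps algebra_simps)
  show "sum_anc anc1 anc2 (twilled_bracket u v) a
      = sum_anc anc1 anc2 u (sum_anc anc1 anc2 v a) - sum_anc anc1 anc2 v (sum_anc anc1 anc2 u a)"
    by (simp add: simps anchor algebra_simps)
qed

lemma twilled_iff_matched_pair: "twilled \<iota> sm1 br1 anc1 sm2 br2 anc2 dot12 dot21 \<longleftrightarrow> matched_pair"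
  using almost_twilled LR_sum_imp_matched_pair matched_pair_imp_LR_sum by (auto simp: twilled_def)

abbreviation "carrier_L \<equiv> UNIV \<times> dual_mod sm2"
abbreviation "carrier_D \<equiv> UNIV \<times> dual_mod sm1"
abbreviation "bracket_L \<equiv> sdp_br br1 anc1 dot12"
abbreviation "bracket_D \<equiv> sdp_br br2 anc2 dot21"
abbreviation "d_star \<equiv> dstar1 bracket_D (sdp_anc anc2) pairing_LD"

text \<open>The coadjoint action of \<open>L\<close> on \<open>D \<cong> Hom\<^sub>A(L, A)\<close>:
  \<open>\<langle>Z, X \<cdot> d\<rangle> = X \<langle>Z, d\<rangle> - \<langle>[X, Z], d\<rangle>\<close>.\<close>

definition coadjoint :: "'p \<times> ('q \<Rightarrow> 'a) \<Rightarrow> 'q \<times> ('p \<Rightarrow> 'a) \<Rightarrow> 'q \<times> ('p \<Rightarrow> 'a)" where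
  "coadjoint X d = (dot12 (fst X) (fst d),
     \<lambda>z. anc1 (fst X) (snd d z) - snd d (br1 (fst X) z) + anc1 z (snd X (fst d)) - snd X (dot12 z (fst d)))"

definition lie_derivative :: "'p \<times> ('q \<Rightarrow> 'a)
    \<Rightarrow> ('q \<times> ('p \<Rightarrow> 'a) \<Rightarrow> 'q \<times> ('p \<Rightarrow> 'a) \<Rightarrow> 'a) \<Rightarrow> 'q \<times> ('p \<Rightarrow> 'a) \<Rightarrow> 'q \<times> ('p \<Rightarrow> 'a) \<Rightarrow> 'a" where
  "lie_derivative X v d1 d2 = anc1 (fst X) (v d1 d2) - v (coadjoint X d1) d2 - v d1 (coadjoint X d2)"

lemma coadjoint_in_carrier: "X \<in> carrier_L \<Longrightarrow> d \<in> carrier_D \<Longrightarrow> coadjoint X d \<in> carrier_D"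
  unfolding coadjoint_def dual_mod_def by (auto simp: structure_simps dual_mod_simps algebra_simps)

lemma pairing_coadjoint:
  assumes "X \<in> carrier_L" "Z \<in> carrier_L" "d \<in> carrier_D"
  shows "pairing_LD Z (coadjoint X d) = anc1 (fst X) (pairing_LD Z d) - pairing_LD (bracket_L X Z) d"
  using assms unfolding coadjoint_def pairing_LD_def sdp_br_def dual_act_def
  by (auto simp: structure_simps dual_mod_simps algebra_simps)

lemma bracket_L_antisym: "bracket_L X Y = - bracket_L Y X"
  by (simp add: sdp_br_def is_LR_antisym[OF LR1, of "fst X"] fun_eq_iff)

lemma pairing_uminus: "d \<in> carrier_D \<Longrightarrow> pairing_LD (- X) d = - pairing_LD X d"
  by (auto simp: pairing_LD_def dual_mod_simps)

lemma lie_derivative_wedge2: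
  assumes "X \<in> carrier_L" "\<alpha> \<in> carrier_L" "\<beta> \<in> carrier_L" "d1 \<in> carrier_D" "d2 \<in> carrier_D"
  shows "wedge2 pairing_LD (bracket_L X \<alpha>) \<beta> d1 d2 + wedge2 pairing_LD \<alpha> (bracket_L X \<beta>) d1 d2
    = lie_derivative X (wedge2 pairing_LD \<alpha> \<beta>) d1 d2"
  using assms by (simp add: wedge2_def lie_derivative_def pairing_coadjoint structure_simps algebra_simps)

lemma lie_derivative_bivector:
  assumes "\<forall>i<n. \<alpha> i \<in> carrier_L \<and> \<beta> i \<in> carrier_L"
    and v: "\<forall>d1\<in>carrier_D. \<forall>d2\<in>carrier_D. v d1 d2 = (\<Sum>i<n. wedge2 pairing_LD (\<alpha> i) (\<beta> i) d1 d2)"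
    and X: "X \<in> carrier_L" and d: "d1 \<in> carrier_D" "d2 \<in> carrier_D"
  shows "(\<Sum>i<n. wedge2 pairing_LD (bracket_L X (\<alpha> i)) (\<beta> i) d1 d2
      + wedge2 pairing_LD (\<alpha> i) (bracket_L X (\<beta> i)) d1 d2) = lie_derivative X v d1 d2"
proof -
  interpret anchor: additive "anc1 (fst X)"
    by unfold_locales (simp add: structure_simps)
  have "(\<Sum>i<n. wedge2 pairing_LD (bracket_L X (\<alpha> i)) (\<beta> i) d1 d2
      + wedge2 pairing_LD (\<alpha> i) (bracket_L X (\<beta> i)) d1 d2)
      = (\<Sum>i<n. lie_derivative X (wedge2 pairing_LD (\<alpha> i) (\<beta> i)) d1 d2)"
    using assms by (intro sum.cong refl) (simp add: lie_derivative_wedge2)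
  also have "\<dots> = lie_derivative X v d1 d2"
  proof -
    have "v d1 d2 = (\<Sum>i<n. wedge2 pairing_LD (\<alpha> i) (\<beta> i) d1 d2)"
      and "v (coadjoint X d1) d2 = (\<Sum>i<n. wedge2 pairing_LD (\<alpha> i) (\<beta> i) (coadjoint X d1) d2)"
      and "v d1 (coadjoint X d2) = (\<Sum>i<n. wedge2 pairing_LD (\<alpha> i) (\<beta> i) d1 (coadjoint X d2))"
      using v[rule_format] d coadjoint_in_carrier[OF X d(1)] coadjoint_in_carrier[OF X d(2)]
      by simp_all
    then show ?thesis
      by (simp add: lie_derivative_def anchor.sum sum_subtractf)
  qed
  finally show ?thesis .
qed

lemma gb_1_2_eq_lie_derivative:
  assumes "gb_1_2 carrier_L carrier_D bracket_L pairing_LD X v w"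
    and "X \<in> carrier_L" "d1 \<in> carrier_D" "d2 \<in> carrier_D"
  shows "w d1 d2 = lie_derivative X v d1 d2"
proof -
  obtain n :: nat and \<alpha> \<beta> where \<alpha>\<beta>: "\<forall>i<n. \<alpha> i \<in> carrier_L \<and> \<beta> i \<in> carrier_L"
    and rep: "\<forall>d1\<in>carrier_D. \<forall>d2\<in>carrier_D. v d1 d2 = (\<Sum>i<n. wedge2 pairing_LD (\<alpha> i) (\<beta> i) d1 d2)
        \<and> w d1 d2 = (\<Sum>i<n. wedge2 pairing_LD (bracket_L X (\<alpha> i)) (\<beta> i) d1 d2
                          + wedge2 pairing_LD (\<alpha> i) (bracket_L X (\<beta> i)) d1 d2)"
    using assms(1) unfolding gb_1_2_def by blast
  have "w d1 d2 = (\<Sum>i<n. wedge2 pairing_LD (bracket_L X (\<alpha> i)) (\<beta> i) d1 d2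
      + wedge2 pairing_LD (\<alpha> i) (bracket_L X (\<beta> i)) d1 d2)"
    using rep assms(3,4) by blast
  also have "\<dots> = lie_derivative X v d1 d2"
    by (rule lie_derivative_bivector[OF \<alpha>\<beta> _ assms(2-4)]) (use rep in blast)
  finally show ?thesis .
qed

lemma gb_2_1_eq_lie_derivative:
  assumes "gb_2_1 carrier_L carrier_D bracket_L pairing_LD u Y w"
    and "Y \<in> carrier_L" "d1 \<in> carrier_D" "d2 \<in> carrier_D"
  shows "w d1 d2 = - lie_derivative Y u d1 d2"
proof -
  obtain n :: nat and \<alpha> \<beta> where \<alpha>\<beta>: "\<forall>i<n. \<alpha> i \<in> carrier_L \<and> \<beta> i \<in> carrier_L"
    and rep: "\<forall>d1\<in>carrier_D. \<forall>d2\<in>carrier_D. u d1 d2 = (\<Sum>i<n. wedge2 pairing_LD (\<alpha> i) (\<beta> i) d1 d2)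
        \<and> w d1 d2 = (\<Sum>i<n. wedge2 pairing_LD (bracket_L (\<alpha> i) Y) (\<beta> i) d1 d2
                          + wedge2 pairing_LD (\<alpha> i) (bracket_L (\<beta> i) Y) d1 d2)"
    using assms(1) unfolding gb_2_1_def by blast
  have "w d1 d2 = (\<Sum>i<n. wedge2 pairing_LD (bracket_L (\<alpha> i) Y) (\<beta> i) d1 d2
      + wedge2 pairing_LD (\<alpha> i) (bracket_L (\<beta> i) Y) d1 d2)"
    using rep assms(3,4) by blast
  also have "\<dots> = - (\<Sum>i<n. wedge2 pairing_LD (bracket_L Y (\<alpha> i)) (\<beta> i) d1 d2
      + wedge2 pairing_LD (\<alpha> i) (bracket_L Y (\<beta> i)) d1 d2)"
    unfolding sum_negf[symmetric] using assms(3,4)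
    by (intro sum.cong refl)
      (simp add: bracket_L_antisym[of _ Y] wedge2_def pairing_uminus algebra_simps)
  also have "\<dots> = - lie_derivative Y u d1 d2"
    by (subst lie_derivative_bivector[OF \<alpha>\<beta> _ assms(2-4), of u]) (use rep in blast, rule refl)
  finally show ?thesis .
qed

text \<open>Elements of \<open>\<Lambda>\<^sup>2 L\<close>, realised as 2-forms on \<open>D\<close> that are finite sums of wedges.\<close>

definition bivector :: "('q \<times> ('p \<Rightarrow> 'a) \<Rightarrow> 'q \<times> ('p \<Rightarrow> 'a) \<Rightarrow> 'a) \<Rightarrow> bool" where
  "bivector u \<longleftrightarrow> (\<exists>(n::nat) \<alpha> \<beta>. (\<forall>i<n. \<alpha> i \<in> carrier_L \<and> \<beta> i \<in> carrier_L) \<and>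
     (\<forall>d1\<in>carrier_D. \<forall>d2\<in>carrier_D. u d1 d2 = (\<Sum>i<n. wedge2 pairing_LD (\<alpha> i) (\<beta> i) d1 d2)))"

lemma bivector_add:
  assumes "bivector u" "bivector v"
    and "\<forall>d1\<in>carrier_D. \<forall>d2\<in>carrier_D. w d1 d2 = u d1 d2 + v d1 d2"
  shows "bivector w"
proof -
  obtain m :: nat and \<alpha> \<beta> where \<alpha>\<beta>: "\<forall>i<m. \<alpha> i \<in> carrier_L \<and> \<beta> i \<in> carrier_L"
    and u: "\<forall>d1\<in>carrier_D. \<forall>d2\<in>carrier_D. u d1 d2 = (\<Sum>i<m. wedge2 pairing_LD (\<alpha> i) (\<beta> i) d1 d2)"
    using assms(1) unfolding bivector_def by blast
  obtain n :: nat and \<gamma> \<delta> where \<gamma>\<delta>: "\<forall>i<n. \<gamma> i \<in> carrier_L \<and> \<delta> i \<in> carrier_L"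
    and v: "\<forall>d1\<in>carrier_D. \<forall>d2\<in>carrier_D. v d1 d2 = (\<Sum>i<n. wedge2 pairing_LD (\<gamma> i) (\<delta> i) d1 d2)"
    using assms(2) unfolding bivector_def by blast
  define \<alpha>' where "\<alpha>' i = (if i < m then \<alpha> i else \<gamma> (i - m))" for i
  define \<beta>' where "\<beta>' i = (if i < m then \<beta> i else \<delta> (i - m))" for i
  have "\<forall>i<m + n. \<alpha>' i \<in> carrier_L \<and> \<beta>' i \<in> carrier_L"
    using \<alpha>\<beta> \<gamma>\<delta> by (auto simp: \<alpha>'_def \<beta>'_def)
  moreover have "\<forall>d1\<in>carrier_D. \<forall>d2\<in>carrier_D. w d1 d2 = (\<Sum>i<m + n. wedge2 pairing_LD (\<alpha>' i) (\<beta>' i) d1 d2)"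
    using assms(3) u v by (simp add: sum_lessThan_add \<alpha>'_def \<beta>'_def)
  ultimately show ?thesis
    unfolding bivector_def by blast
qed

lemma bivector_alternating_form:
  assumes "fg_projective sm2"
    and linear: "\<And>\<eta>. (\<lambda>\<xi>. \<Phi> \<xi> \<eta>) \<in> dual_mod sm2"
    and antisym: "\<And>\<xi> \<eta>. \<Phi> \<xi> \<eta> = - \<Phi> \<eta> \<xi>" and alternating: "\<And>\<xi>. \<Phi> \<xi> \<xi> = 0"
  shows "bivector (\<lambda>d1 d2. \<Phi> (fst d1) (fst d2))"
proof -
  obtain n e f where f: "\<forall>i<(n::nat). f i \<in> dual_mod sm2" and basis: "\<forall>x. x = (\<Sum>i<n. sm2 (f i x) (e i))"
    using assms(1) unfolding fg_projective_def by blast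
  define \<theta> where "\<theta> j = (\<lambda>\<eta>. \<Sum>l\<in>{j<..<n}. \<Phi> (e j) (e l) * f l \<eta>)" for j
  have "\<theta> j \<in> dual_mod sm2" for j
    unfolding \<theta>_def using f by (intro dual_mod_lincomb) auto
  then have members: "\<forall>j<n. ((0::'p), f j) \<in> carrier_L \<and> ((0::'p), \<theta> j) \<in> carrier_L"
    using f by blast
  have expansion: "\<Phi> (fst d1) (fst d2) = (\<Sum>j<n. wedge2 pairing_LD (0, f j) (0, \<theta> j) d1 d2)"
    if "d1 \<in> carrier_D" "d2 \<in> carrier_D" for d1 d2
  proof -
    have "\<Phi> (fst d1) (fst d2) = (\<Sum>j<n. \<Sum>l\<in>{j<..<n}.
        \<Phi> (e j) (e l) * (f j (fst d1) * f l (fst d2) - f l (fst d1) * f j (fst d2)))"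
      by (rule alternating_form_expansion[OF _ _ linear antisym alternating]) (use f basis in blast)+
    also have "\<dots> = (\<Sum>j<n. f j (fst d1) * \<theta> j (fst d2) - f j (fst d2) * \<theta> j (fst d1))"
      by (intro sum.cong refl) (simp add: \<theta>_def sum_distrib_left sum_subtractf[symmetric] algebra_simps)
    also have "\<dots> = (\<Sum>j<n. wedge2 pairing_LD (0, f j) (0, \<theta> j) d1 d2)"
      using that by (auto simp: wedge2_def pairing_LD_def dual_mod_simps)
    finally show ?thesis .
  qed
  show ?thesis
    unfolding bivector_def using members expansion
    by (intro exI[of _ n] exI[of _ "\<lambda>j. (0, f j)"] exI[of _ "\<lambda>j. (0, \<theta> j)"]) simp
qed

lemma bivector_dual_action:
  assumes "fg_projective sm1"
  shows "bivector (\<lambda>d1 d2. snd d2 (dot21 (fst d1) x) - snd d1 (dot21 (fst d2) x))"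
proof -
  obtain n e f where f: "\<forall>i<(n::nat). f i \<in> dual_mod sm1" and basis: "\<forall>x. x = (\<Sum>i<n. sm1 (f i x) (e i))"
    using assms unfolding fg_projective_def by blast
  define \<tau> where "\<tau> i = (\<lambda>\<xi>. f i (dot21 \<xi> x))" for i
  have "\<tau> i \<in> dual_mod sm2" if "i < n" for i
    using f that by (auto simp: \<tau>_def dual_mod_def structure_simps)
  then have members: "\<forall>i<n. ((0::'p), \<tau> i) \<in> carrier_L \<and> (e i, 0) \<in> carrier_L"
    using dual_mod_zero by blast
  have expansion: "snd d2 (dot21 (fst d1) x) - snd d1 (dot21 (fst d2) x)
      = (\<Sum>i<n. wedge2 pairing_LD (0, \<tau> i) (e i, 0) d1 d2)"
    if "d1 \<in> carrier_D" "d2 \<in> carrier_D" for d1 d2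
  proof -
    have "snd d2 (dot21 (fst d1) x) - snd d1 (dot21 (fst d2) x)
      = snd d2 (\<Sum>i<n. sm1 (f i (dot21 (fst d1) x)) (e i)) - snd d1 (\<Sum>i<n. sm1 (f i (dot21 (fst d2) x)) (e i))"
      using basis by metis
    also have "\<dots> = (\<Sum>i<n. wedge2 pairing_LD (0, \<tau> i) (e i, 0) d1 d2)"
      using that by (auto simp: wedge2_def pairing_LD_def \<tau>_def dual_mod_simps sum_subtractf)
    finally show ?thesis .
  qed
  show ?thesis
    unfolding bivector_def using members expansion
    by (intro exI[of _ n] exI[of _ "\<lambda>i. (0, \<tau> i)"] exI[of _ "\<lambda>i. (e i, 0)"]) simp
qed

lemma d_star_bivector:
  assumes "fg_projective sm1" "fg_projective sm2" "X \<in> carrier_L"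
  shows "bivector (d_star X)"
proof -
  obtain x \<phi> where X: "X = (x, \<phi>)" and \<phi>: "\<phi> \<in> dual_mod sm2"
    using assms(3) by blast
  \<comment> \<open>the Chevalley-Eilenberg differential of \<open>\<phi>\<close> on \<open>L''\<close>; the rest of \<open>d\<^sub>* X\<close> comes from \<open>L''\<close> acting on \<open>x\<close>\<close>
  define \<Phi> where "\<Phi> \<xi> \<eta> = anc2 \<xi> (\<phi> \<eta>) - anc2 \<eta> (\<phi> \<xi>) - \<phi> (br2 \<xi> \<eta>)" for \<xi> \<eta>
  have differential: "bivector (\<lambda>d1 d2. \<Phi> (fst d1) (fst d2))"
  proof (rule bivector_alternating_form[OF assms(2)])
    show "(\<lambda>\<xi>. \<Phi> \<xi> \<eta>) \<in> dual_mod sm2" for \<eta>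
      by (rule dual_modI)
        (simp_all add: \<Phi>_def structure_simps is_LR_bracket_scale_left[OF LR2] dual_mod_simps[OF \<phi>] algebra_simps)
    show "\<Phi> \<xi> \<eta> = - \<Phi> \<eta> \<xi>" for \<xi> \<eta>
      using is_LR_antisym[OF LR2, of \<xi> \<eta>] by (simp add: \<Phi>_def dual_mod_simps[OF \<phi>])
    show "\<Phi> \<xi> \<xi> = 0" for \<xi>
      by (simp add: \<Phi>_def structure_simps dual_mod_simps[OF \<phi>])
  qed
  have "d_star X d1 d2 = \<Phi> (fst d1) (fst d2) + (snd d2 (dot21 (fst d1) x) - snd d1 (dot21 (fst d2) x))"
    if "d1 \<in> carrier_D" "d2 \<in> carrier_D" for d1 d2
    using that \<phi>
    by (auto simp: X \<Phi>_def dstar1_def sdp_br_def sdp_anc_def pairing_LD_def dual_act_def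
        structure_simps dual_mod_simps algebra_simps)
  then show ?thesis
    by (intro bivector_add[OF differential bivector_dual_action[OF assms(1), of x]]) simp
qed

definition d_star_is_derivation :: bool where
  "d_star_is_derivation \<longleftrightarrow> (\<forall>X\<in>carrier_L. \<forall>Y\<in>carrier_L. \<forall>d1\<in>carrier_D. \<forall>d2\<in>carrier_D.
     d_star (bracket_L X Y) d1 d2 = lie_derivative X (d_star Y) d1 d2 - lie_derivative Y (d_star X) d1 d2)"

lemma gb_2_1_exists:
  assumes "bivector u"
  shows "\<exists>w. gb_2_1 carrier_L carrier_D bracket_L pairing_LD u Y w"
proof -
  obtain n :: nat and \<alpha> \<beta> where "\<forall>i<n. \<alpha> i \<in> carrier_L \<and> \<beta> i \<in> carrier_L"
    and "\<forall>d1\<in>carrier_D. \<forall>d2\<in>carrier_D. u d1 d2 = (\<Sum>i<n. wedge2 pairing_LD (\<alpha> i) (\<beta> i) d1 d2)"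
    using assms unfolding bivector_def by blast
  then show ?thesis
    unfolding gb_2_1_def
    by (intro exI[of _ "\<lambda>d1 d2. \<Sum>i<n. wedge2 pairing_LD (bracket_L (\<alpha> i) Y) (\<beta> i) d1 d2
        + wedge2 pairing_LD (\<alpha> i) (bracket_L (\<beta> i) Y) d1 d2"] exI[of _ n] exI[of _ \<alpha>] exI[of _ \<beta>])
      simp
qed

lemma gb_1_2_exists:
  assumes "bivector v"
  shows "\<exists>w. gb_1_2 carrier_L carrier_D bracket_L pairing_LD X v w"
proof -
  obtain n :: nat and \<alpha> \<beta> where "\<forall>i<n. \<alpha> i \<in> carrier_L \<and> \<beta> i \<in> carrier_L"
    and "\<forall>d1\<in>carrier_D. \<forall>d2\<in>carrier_D. v d1 d2 = (\<Sum>i<n. wedge2 pairing_LD (\<alpha> i) (\<beta> i) d1 d2)"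
    using assms unfolding bivector_def by blast
  then show ?thesis
    unfolding gb_1_2_def
    by (intro exI[of _ "\<lambda>d1 d2. \<Sum>i<n. wedge2 pairing_LD (bracket_L X (\<alpha> i)) (\<beta> i) d1 d2
        + wedge2 pairing_LD (\<alpha> i) (bracket_L X (\<beta> i)) d1 d2"] exI[of _ n] exI[of _ \<alpha>] exI[of _ \<beta>])
      simp
qed

lemma bialgebra_condition_iff_lie_derivatives:
  assumes "fg_projective sm1" "fg_projective sm2" and X: "X \<in> carrier_L" and Y: "Y \<in> carrier_L"
  shows "(\<exists>w1 w2. gb_2_1 carrier_L carrier_D bracket_L pairing_LD (d_star X) Y w1
        \<and> gb_1_2 carrier_L carrier_D bracket_L pairing_LD X (d_star Y) w2
        \<and> (\<forall>d1\<in>carrier_D. \<forall>d2\<in>carrier_D. d_star (bracket_L X Y) d1 d2 = w1 d1 d2 + w2 d1 d2))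
      \<longleftrightarrow> (\<forall>d1\<in>carrier_D. \<forall>d2\<in>carrier_D.
        d_star (bracket_L X Y) d1 d2 = lie_derivative X (d_star Y) d1 d2 - lie_derivative Y (d_star X) d1 d2)"
    (is "?bialgebra \<longleftrightarrow> ?lie_derivatives")
proof
  assume ?bialgebra
  then obtain w1 w2 where "gb_2_1 carrier_L carrier_D bracket_L pairing_LD (d_star X) Y w1"
    and "gb_1_2 carrier_L carrier_D bracket_L pairing_LD X (d_star Y) w2"
    and "\<forall>d1\<in>carrier_D. \<forall>d2\<in>carrier_D. d_star (bracket_L X Y) d1 d2 = w1 d1 d2 + w2 d1 d2"
    by blast
  then show ?lie_derivatives
    using gb_2_1_eq_lie_derivative[OF _ Y] gb_1_2_eq_lie_derivative[OF _ X] by simp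
next
  assume ?lie_derivatives
  obtain w1 where w1: "gb_2_1 carrier_L carrier_D bracket_L pairing_LD (d_star X) Y w1"
    using gb_2_1_exists[OF d_star_bivector[OF assms(1,2) X]] by blast
  obtain w2 where w2: "gb_1_2 carrier_L carrier_D bracket_L pairing_LD X (d_star Y) w2"
    using gb_1_2_exists[OF d_star_bivector[OF assms(1,2) Y]] by blast
  show ?bialgebra
    using \<open>?lie_derivatives\<close> w1 w2 gb_2_1_eq_lie_derivative[OF w1 Y] gb_1_2_eq_lie_derivative[OF w2 X]
    by (intro exI[of _ w1] exI[of _ w2]) simp
qed

lemma LR_bialgebra_iff_d_star_is_derivation:
  assumes "fg_projective sm1" "fg_projective sm2"
  shows "LR_bialgebra \<iota> carrier_L (sdp_sm sm1) bracket_L (sdp_anc anc1)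
      carrier_D (sdp_sm sm2) bracket_D (sdp_anc anc2) pairing_LD \<longleftrightarrow> d_star_is_derivation"
  using is_LR_semidirect[OF LR1 module12] is_LR_semidirect[OF LR2 module21]
    bialgebra_condition_iff_lie_derivatives[OF assms]
  by (simp add: LR_bialgebra_def d_star_is_derivation_def)

lemma d_star_derivation_defect:
  assumes "\<phi> \<in> dual_mod sm2" "\<chi> \<in> dual_mod sm2" "\<alpha> \<in> dual_mod sm1" "\<beta> \<in> dual_mod sm1"
  shows "d_star (bracket_L (x, \<phi>) (y, \<chi>)) (\<xi>, \<alpha>) (\<eta>, \<beta>)
      - (lie_derivative (x, \<phi>) (d_star (y, \<chi>)) (\<xi>, \<alpha>) (\<eta>, \<beta>)
         - lie_derivative (y, \<chi>) (d_star (x, \<phi>)) (\<xi>, \<alpha>) (\<eta>, \<beta>))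
    = \<beta> (jacobiator' x y \<xi>) - \<alpha> (jacobiator' x y \<eta>) + \<chi> (jacobiator'' x \<xi> \<eta>) - \<phi> (jacobiator'' y \<xi> \<eta>)
      + anchor_defect x \<xi> (\<chi> \<eta>) - anchor_defect x \<eta> (\<chi> \<xi>)
      - anchor_defect y \<xi> (\<phi> \<eta>) + anchor_defect y \<eta> (\<phi> \<xi>)"
  unfolding jacobiator'_def jacobiator''_def anchor_defect_def lie_derivative_def coadjoint_def
    dstar1_def sdp_br_def sdp_anc_def pairing_LD_def dual_act_def
  by (simp add: structure_simps dual_mod_simps[OF assms(1)] dual_mod_simps[OF assms(2)]
      dual_mod_simps[OF assms(3)] dual_mod_simps[OF assms(4)]
      is_LR_antisym[OF LR2, of "dot12 x \<xi>" \<eta>] is_LR_antisym[OF LR2, of "dot12 y \<xi>" \<eta>] algebra_simps)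

lemma matched_pair_imp_d_star_is_derivation:
  assumes matched_pair
  shows d_star_is_derivation
  unfolding d_star_is_derivation_def
proof (intro ballI)
  have defects: "jacobiator' x y \<eta> = 0" "jacobiator'' x \<xi> \<eta> = 0" "anchor_defect x \<xi> a = 0"
    for x y \<xi> \<eta> a
    using assms by (simp_all add: matched_pair_def)
  fix X Y :: "'p \<times> ('q \<Rightarrow> 'a)" and d1 d2 :: "'q \<times> ('p \<Rightarrow> 'a)"
  assume "X \<in> carrier_L" "Y \<in> carrier_L" "d1 \<in> carrier_D" "d2 \<in> carrier_D"
  then obtain x \<phi> y \<chi> \<xi> \<alpha> \<eta> \<beta> where XY: "X = (x, \<phi>)" "Y = (y, \<chi>)" "d1 = (\<xi>, \<alpha>)" "d2 = (\<eta>, \<beta>)"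
    and duals: "\<phi> \<in> dual_mod sm2" "\<chi> \<in> dual_mod sm2" "\<alpha> \<in> dual_mod sm1" "\<beta> \<in> dual_mod sm1"
    by blast
  show "d_star (bracket_L X Y) d1 d2 = lie_derivative X (d_star Y) d1 d2 - lie_derivative Y (d_star X) d1 d2"
    using d_star_derivation_defect[OF duals, of x y \<xi> \<eta>]
    by (simp add: XY defects dual_mod_simps[OF duals(1)] dual_mod_simps[OF duals(2)]
        dual_mod_simps[OF duals(3)] dual_mod_simps[OF duals(4)])
qed

lemma d_star_is_derivation_imp_matched_pair:
  assumes "fg_projective sm1" "fg_projective sm2" and derivation: d_star_is_derivation
  shows matched_pair
proof -
  have defect_eq_zero:
    "\<beta> (jacobiator' x y \<xi>) - \<alpha> (jacobiator' x y \<eta>) + \<chi> (jacobiator'' x \<xi> \<eta>) - \<phi> (jacobiator'' y \<xi> \<eta>)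
      + anchor_defect x \<xi> (\<chi> \<eta>) - anchor_defect x \<eta> (\<chi> \<xi>)
      - anchor_defect y \<xi> (\<phi> \<eta>) + anchor_defect y \<eta> (\<phi> \<xi>) = 0"
    if "\<phi> \<in> dual_mod sm2" "\<chi> \<in> dual_mod sm2" "\<alpha> \<in> dual_mod sm1" "\<beta> \<in> dual_mod sm1"
    for x y \<xi> \<eta> \<phi> \<chi> \<alpha> \<beta>
    using derivation that d_star_derivation_defect[OF that, of x y \<xi> \<eta>]
    unfolding d_star_is_derivation_def by simp
  have jacobiator'_zero: "jacobiator' x y \<eta> = 0" for x y \<eta>
  proof (rule fg_projective_eq_zeroI[OF assms(1) is_LR_UNIV_A_module[OF LR1]])
    fix \<beta> assume "\<beta> \<in> dual_mod sm1"
    then show "\<beta> (jacobiator' x y \<eta>) = 0"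
      using defect_eq_zero[OF dual_mod_zero dual_mod_zero dual_mod_zero, of \<beta> x y \<eta>]
      by (simp add: anchor_defect_def structure_simps)
  qed
  have anchor_defect_zero: "anchor_defect x \<xi> a = 0" for x \<xi> a
    by (rule anchor_defect_eq_zero[OF assms(1) jacobiator'_zero])
  have jacobiator''_zero: "jacobiator'' x \<xi> \<eta> = 0" for x \<xi> \<eta>
  proof (rule fg_projective_eq_zeroI[OF assms(2) is_LR_UNIV_A_module[OF LR2]])
    fix \<chi> assume "\<chi> \<in> dual_mod sm2"
    then show "\<chi> (jacobiator'' x \<xi> \<eta>) = 0"
      using defect_eq_zero[OF dual_mod_zero _ dual_mod_zero dual_mod_zero, of \<chi> x 0 \<xi> \<eta>]
      by (simp add: anchor_defect_zero)
  qed
  show matched_pair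
    by (simp add: matched_pair_def jacobiator'_zero jacobiator''_zero anchor_defect_zero)
qed

end

theorem corollary4p2:
  fixes \<iota> :: "'r::comm_ring_1 \<Rightarrow> 'a::comm_ring_1"
    and sm1 :: "'a \<Rightarrow> 'p::ab_group_add \<Rightarrow> 'p" and br1 :: "'p \<Rightarrow> 'p \<Rightarrow> 'p" and anc1 :: "'p \<Rightarrow> 'a \<Rightarrow> 'a"
    and sm2 :: "'a \<Rightarrow> 'q::ab_group_add \<Rightarrow> 'q" and br2 :: "'q \<Rightarrow> 'q \<Rightarrow> 'q" and anc2 :: "'q \<Rightarrow> 'a \<Rightarrow> 'a"
    and dot12 :: "'p \<Rightarrow> 'q \<Rightarrow> 'q" and dot21 :: "'q \<Rightarrow> 'p \<Rightarrow> 'p"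
  assumes "R_algebra_map \<iota>"
    and "almost_twilled \<iota> sm1 br1 anc1 sm2 br2 anc2 dot12 dot21"
    and "fg_projective sm1" and "fg_projective sm2"
  shows "twilled \<iota> sm1 br1 anc1 sm2 br2 anc2 dot12 dot21 \<longleftrightarrow>
         LR_bialgebra \<iota>
           (UNIV \<times> dual_mod sm2) (sdp_sm sm1) (sdp_br br1 anc1 dot12) (sdp_anc anc1)
           (UNIV \<times> dual_mod sm1) (sdp_sm sm2) (sdp_br br2 anc2 dot21) (sdp_anc anc2)
           pairing_LD"
proof -
  interpret almost_twilled_LR \<iota> sm1 br1 anc1 sm2 br2 anc2 dot12 dot21
    by unfold_locales (fact assms(2))
  have "twilled \<iota> sm1 br1 anc1 sm2 br2 anc2 dot12 dot21 \<longleftrightarrow> matched_pair"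
    by (rule twilled_iff_matched_pair)
  also have "\<dots> \<longleftrightarrow> d_star_is_derivation"
    using matched_pair_imp_d_star_is_derivation d_star_is_derivation_imp_matched_pair[OF assms(3,4)]
    by blast
  also have "\<dots> \<longleftrightarrow> LR_bialgebra \<iota> (UNIV \<times> dual_mod sm2) (sdp_sm sm1) (sdp_br br1 anc1 dot12) (sdp_anc anc1)
      (UNIV \<times> dual_mod sm1) (sdp_sm sm2) (sdp_br br2 anc2 dot21) (sdp_anc anc2) pairing_LD"
    by (rule LR_bialgebra_iff_d_star_is_derivation[OF assms(3,4), symmetric])
  finally show ?thesis .
qed

end
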